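(* Let $w_1,\dots,w_n\ge0$, not all zero, and $a_1,\dots,a_n\in\mathbb R$. Let $R(t)=\sum_{i\le n}w_i\exp(a_it)$, $K(t)=\log R(t)$, $v_i(t)=w_i\exp(a_it)/R(t)$ and $\bar a(t)=\sum_{i\le n}v_i(t)a_i$. (i) $K$ is convex, with $$K'(t)=\bar a(t),\quad K''(t)=\sum_{i\le n}v_i(t)\{a_i-\bar a(t)\}^2,\quad K'''(t)=\sum_{i\le n}v_i(t)\{a_i-\bar a(t)\}^3.$$ (ii) For all $t$, $$\log\Big\{\sum_{i\le n}w_ie^{a_it}\Big\}-\log\Big\{\sum_{i\le n}w_i\Big\}=\bar a(0)t+\tfrac12\sum_{i\le n}v_i(0)\{a_i-\bar a(0)\}^2t^2+v(t),$$ where $v_i(0)=w_i/\sum_{j\le n}w_j$, and the remainder satisfies $$|v(t)|\le\tfrac43\mu_n^3|t|^3,\qquad |v(t)|\le\tfrac23 g(\mu_n|t|)\sum_{i\le n}v_i(0)\{a_i-\bar a(0)\}^2|t|^2,$$ with $\mu_n=\max_{i\le n}|a_i-\bar a(0)|$ and $g(u)=u\exp(2u+4u^2)$. *)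

theory Defs
  imports "HOL-Analysis.Analysis"
begin

text \<open>Indices i = 1..n of the paper are rendered as i < n (i.e. 0..n-1).\<close>

definition Rf :: "nat \<Rightarrow> (nat \<Rightarrow> real) \<Rightarrow> (nat \<Rightarrow> real) \<Rightarrow> real \<Rightarrow> real" where
  "Rf n w a t = (\<Sum>i<n. w i * exp (a i * t))"

definition Kf :: "nat \<Rightarrow> (nat \<Rightarrow> real) \<Rightarrow> (nat \<Rightarrow> real) \<Rightarrow> real \<Rightarrow> real" where
  "Kf n w a t = ln (Rf n w a t)"

definition vf :: "nat \<Rightarrow> (nat \<Rightarrow> real) \<Rightarrow> (nat \<Rightarrow> real) \<Rightarrow> nat \<Rightarrow> real \<Rightarrow> real" where
  "vf n w a i t = w i * exp (a i * t) / Rf n w a t"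

definition abar :: "nat \<Rightarrow> (nat \<Rightarrow> real) \<Rightarrow> (nat \<Rightarrow> real) \<Rightarrow> real \<Rightarrow> real" where
  "abar n w a t = (\<Sum>i<n. vf n w a i t * a i)"

definition gfun :: "real \<Rightarrow> real" where
  "gfun u = u * exp (2 * u + 4 * u ^ 2)"

end

theory Submission
  imports Defs
begin

text \<open>
  The functions vf t are probability weights on the a i and K is their cumulant
  generating function, so K' is the mean, K'' the variance and K''' the third central
  moment of these weights.  Taylor's theorem with Lagrange remainder reduces the bounds
  on v(t) to bounds on the third central moment at some x between 0 and t.  Its absolute
  value is at most 2\<mu> times the variance at x, and that variance is at most the second
  moment about abar 0, which is at most \<mu>^2; it is also at most exp(\<mu>|x|) times the
  variance at 0, because by Jensen's inequality the weights grow by at most that factor.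
\<close>

lemma weighted_mean_dist_le:
  fixes v a :: "'i \<Rightarrow> real"
  assumes "\<And>i. i \<in> A \<Longrightarrow> v i \<ge> 0" "sum v A = 1" "\<And>i. i \<in> A \<Longrightarrow> \<bar>a i - c\<bar> \<le> \<mu>"
  shows "\<bar>(\<Sum>i\<in>A. v i * a i) - c\<bar> \<le> \<mu>"
proof -
  have "(\<Sum>i\<in>A. v i * a i) - c = (\<Sum>i\<in>A. v i * (a i - c))"
    using assms(2) by (simp add: right_diff_distrib sum_subtractf flip: sum_distrib_right)
  also have "\<bar>\<dots>\<bar> \<le> (\<Sum>i\<in>A. v i * \<mu>)"
    using assms(1,3) by (intro order.trans[OF sum_abs] sum_mono) (simp add: abs_mult mult_left_mono)
  also have "\<dots> = \<mu>"
    using assms(2) by (simp flip: sum_distrib_right)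
  finally show ?thesis .
qed

lemma weighted_second_moment_shift:
  fixes v a :: "'i \<Rightarrow> real"
  assumes "sum v A = 1"
  defines "m \<equiv> \<Sum>i\<in>A. v i * a i"
  shows "(\<Sum>i\<in>A. v i * (a i - c)^2) = (\<Sum>i\<in>A. v i * (a i - m)^2) + (m - c)^2"
proof -
  have "(\<Sum>i\<in>A. v i * (a i - c)^2)
      = (\<Sum>i\<in>A. v i * (a i - m)^2) + 2 * (m - c) * ((\<Sum>i\<in>A. v i * a i) - m * sum v A)
        + (m - c)^2 * sum v A"
    by (simp add: sum_distrib_left sum_distrib_right sum_subtractf power2_eq_square
        algebra_simps flip: sum.distrib)
  then show ?thesis
    using assms(1) by (simp add: m_def)
qed

lemma weighted_variance_le_second_moment:
  fixes v a :: "'i \<Rightarrow> real"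
  assumes "sum v A = 1"
  shows "(\<Sum>i\<in>A. v i * (a i - (\<Sum>j\<in>A. v j * a j))^2) \<le> (\<Sum>i\<in>A. v i * (a i - c)^2)"
  using weighted_second_moment_shift[OF assms, of a c] by simp

lemma abs_weighted_cube_le:
  fixes v a :: "'i \<Rightarrow> real"
  assumes "\<And>i. i \<in> A \<Longrightarrow> v i \<ge> 0" "\<And>i. i \<in> A \<Longrightarrow> \<bar>a i - b\<bar> \<le> d"
  shows "\<bar>\<Sum>i\<in>A. v i * (a i - b)^3\<bar> \<le> d * (\<Sum>i\<in>A. v i * (a i - b)^2)"
proof -
  have "\<bar>v i * (a i - b)^3\<bar> \<le> d * (v i * (a i - b)^2)" if "i \<in> A" for i
  proof -
    have "\<bar>v i * (a i - b)^3\<bar> = v i * (a i - b)^2 * \<bar>a i - b\<bar>"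
      using assms(1)[OF that] by (simp add: abs_mult power3_eq_cube power2_eq_square)
    also have "\<dots> \<le> v i * (a i - b)^2 * d"
      using assms[OF that] by (intro mult_left_mono) auto
    finally show ?thesis by (simp add: mult.commute)
  qed
  then show ?thesis
    by (intro order.trans[OF sum_abs]) (auto intro: sum_mono simp: sum_distrib_left)
qed

definition cmoment :: "nat \<Rightarrow> (nat \<Rightarrow> real) \<Rightarrow> (nat \<Rightarrow> real) \<Rightarrow> nat \<Rightarrow> real \<Rightarrow> real" where
  "cmoment n w a k t = (\<Sum>i<n. vf n w a i t * (a i - abar n w a t)^k)"

lemma Rf_pos:
  assumes "\<And>i. i < n \<Longrightarrow> w i \<ge> 0" "\<exists>i<n. w i \<noteq> 0"
  shows "Rf n w a t > 0"
proof -
  obtain j where j: "j < n" "w j \<noteq> 0"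
    using assms(2) by blast
  have "0 < w j * exp (a j * t)"
    using j assms(1)[of j] by simp
  also have "\<dots> \<le> Rf n w a t"
    unfolding Rf_def using j assms(1) by (intro member_le_sum) auto
  finally show ?thesis .
qed

lemma Rf_has_real_derivative:
  "(Rf n w a has_real_derivative (\<Sum>i<n. w i * a i * exp (a i * t))) (at t)"
  unfolding Rf_def by (auto intro!: derivative_eq_intros sum.cong)

lemma abar_eq: "abar n w a t = (\<Sum>i<n. w i * a i * exp (a i * t)) / Rf n w a t"
  unfolding abar_def vf_def sum_divide_distrib by (rule sum.cong) auto

lemma vf_at_0: "vf n w a i 0 = w i / (\<Sum>j<n. w j)"
  unfolding vf_def Rf_def by simp

lemma vf_nonneg:
  assumes "\<And>i. i < n \<Longrightarrow> w i \<ge> 0" "Rf n w a t > 0" "i < n"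
  shows "vf n w a i t \<ge> 0"
  using assms unfolding vf_def by simp

lemma sum_vf:
  assumes "Rf n w a t \<noteq> 0"
  shows "(\<Sum>i<n. vf n w a i t) = 1"
  using assms unfolding vf_def Rf_def by (simp flip: sum_divide_distrib)

lemma sum_vf_centred:
  assumes "Rf n w a t \<noteq> 0"
  shows "(\<Sum>i<n. vf n w a i t * (a i - abar n w a t)) = 0"
  using sum_vf[OF assms] unfolding abar_def
  by (simp add: right_diff_distrib sum_subtractf flip: sum_distrib_right)

lemma vf_has_real_derivative:
  assumes "Rf n w a t > 0"
  shows "((\<lambda>s. vf n w a i s) has_real_derivative vf n w a i t * (a i - abar n w a t)) (at t)"
proof -
  have "((\<lambda>s. w i * exp (a i * s) / Rf n w a s) has_real_derivative
      (w i * (exp (a i * t) * a i) * Rf n w a t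
        - w i * exp (a i * t) * (\<Sum>i<n. w i * a i * exp (a i * t))) / (Rf n w a t * Rf n w a t)) (at t)"
    using assms by (intro DERIV_divide Rf_has_real_derivative) (auto intro!: derivative_eq_intros)
  moreover have "(w i * (exp (a i * t) * a i) * Rf n w a t
        - w i * exp (a i * t) * (\<Sum>i<n. w i * a i * exp (a i * t))) / (Rf n w a t * Rf n w a t)
      = vf n w a i t * (a i - abar n w a t)"
    using assms unfolding vf_def abar_eq by (simp add: field_simps)
  ultimately show ?thesis
    unfolding vf_def by simp
qed

lemma Kf_has_real_derivative:
  assumes "Rf n w a t > 0"
  shows "(Kf n w a has_real_derivative abar n w a t) (at t)"
proof -
  have "((\<lambda>s. ln (Rf n w a s)) has_real_derivative
      (\<Sum>i<n. w i * a i * exp (a i * t)) / Rf n w a t) (at t)"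
    using assms Rf_has_real_derivative by (auto intro!: derivative_eq_intros simp: divide_simps)
  then show ?thesis
    unfolding Kf_def[abs_def] abar_eq .
qed

lemma cmoment_2_nonneg:
  assumes "\<And>i. i < n \<Longrightarrow> w i \<ge> 0" "Rf n w a t > 0"
  shows "cmoment n w a 2 t \<ge> 0"
  unfolding cmoment_def using assms by (auto intro!: sum_nonneg mult_nonneg_nonneg vf_nonneg)

lemma abar_has_real_derivative:
  assumes "\<And>t. Rf n w a t > 0"
  shows "(abar n w a has_real_derivative cmoment n w a 2 t) (at t)"
proof -
  define b where "b = abar n w a t"
  have "((\<lambda>s. \<Sum>i<n. vf n w a i s * a i) has_real_derivative
      (\<Sum>i<n. vf n w a i t * (a i - b) * a i)) (at t)"
    unfolding b_def by (intro DERIV_sum DERIV_cmult_right vf_has_real_derivative assms)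
  moreover have "(\<Sum>i<n. vf n w a i t * (a i - b) * a i)
      = (\<Sum>i<n. vf n w a i t * (a i - b)^2 + vf n w a i t * (a i - b) * b)"
    by (rule sum.cong) (simp_all add: power2_eq_square algebra_simps)
  moreover have "\<dots> = cmoment n w a 2 t"
    using sum_vf_centred assms unfolding cmoment_def b_def
    by (simp add: sum.distrib less_imp_not_eq2 flip: sum_distrib_right)
  ultimately show ?thesis
    unfolding abar_def[abs_def] by simp
qed

lemma cmoment_2_has_real_derivative:
  assumes "\<And>t. Rf n w a t > 0"
  shows "(cmoment n w a 2 has_real_derivative cmoment n w a 3 t) (at t)"
proof -
  define b where "b = abar n w a t"
  define M2 where "M2 = cmoment n w a 2 t"
  have "((\<lambda>s. vf n w a i s * (a i - abar n w a s)^2) has_real_derivative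
      vf n w a i t * (a i - b)^3 - 2 * M2 * (vf n w a i t * (a i - b))) (at t)" for i
    unfolding b_def M2_def
    by (rule DERIV_cong[OF DERIV_mult[OF vf_has_real_derivative
          DERIV_power[OF DERIV_diff[OF DERIV_const abar_has_real_derivative]]]])
      (simp_all add: assms power2_eq_square power3_eq_cube algebra_simps)
  then have "(cmoment n w a 2 has_real_derivative
      (\<Sum>i<n. vf n w a i t * (a i - b)^3 - 2 * M2 * (vf n w a i t * (a i - b)))) (at t)"
    unfolding cmoment_def[abs_def] by (rule DERIV_sum)
  moreover have "(\<Sum>i<n. vf n w a i t * (a i - b)^3 - 2 * M2 * (vf n w a i t * (a i - b)))
      = cmoment n w a 3 t"
    using sum_vf_centred assms unfolding cmoment_def b_def
    by (simp add: sum_subtractf less_imp_not_eq2 flip: sum_distrib_left)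
  ultimately show ?thesis
    by simp
qed

lemma Kf_convex:
  assumes "\<And>t. Rf n w a t > 0" "\<And>i. i < n \<Longrightarrow> w i \<ge> 0"
  shows "convex_on UNIV (Kf n w a)"
proof (rule convex_on_realI[where f' = "abar n w a"])
  show "abar n w a x \<le> abar n w a y" if "x \<le> y" for x y
    using that abar_has_real_derivative[OF assms(1)] cmoment_2_nonneg[OF assms(2,1)]
    by (blast intro: DERIV_nonneg_imp_nondecreasing)
qed (use Kf_has_real_derivative assms in auto)

lemma Kf_Maclaurin:
  assumes "\<And>t. Rf n w a t > 0"
  obtains x where "\<bar>x\<bar> \<le> \<bar>t\<bar>" "Kf n w a t = Kf n w a 0 + abar n w a 0 * t
    + cmoment n w a 2 0 / 2 * t^2 + cmoment n w a 3 x / 6 * t^3"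
proof -
  define D where "D m = [Kf n w a, abar n w a, cmoment n w a 2, cmoment n w a 3] ! m" for m
  have "\<exists>x. \<bar>x\<bar> \<le> \<bar>t\<bar> \<and> Kf n w a t = (\<Sum>m<3. D m 0 / fact m * t^m) + D 3 x / fact 3 * t^3"
  proof (rule Maclaurin_bi_le)
    show "\<forall>m x. m < 3 \<and> \<bar>x\<bar> \<le> \<bar>t\<bar> \<longrightarrow> (D m has_real_derivative D (Suc m) x) (at x)"
      using Kf_has_real_derivative abar_has_real_derivative cmoment_2_has_real_derivative assms
      by (auto simp: D_def less_Suc_eq numeral_3_eq_3)
  qed (simp add: D_def)
  then show ?thesis
    using that by (auto simp: D_def eval_nat_numeral fact_numeral)
qed

context
  fixes n w a \<mu>
  assumes w_nonneg: "\<And>i. i < n \<Longrightarrow> w i \<ge> 0"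
    and Rf_pos: "\<And>t. Rf n w a t > 0"
    and dev_le: "\<And>i. i < n \<Longrightarrow> \<bar>a i - abar n w a 0\<bar> \<le> \<mu>"
begin

text \<open>This is Jensen's inequality for exp, via exp y \<ge> 1 + y and the centring of the weights.\<close>

lemma Rf_ge_exp_abar: "Rf n w a x \<ge> Rf n w a 0 * exp (abar n w a 0 * x)"
proof -
  define c where "c = abar n w a 0"
  define W where "W = Rf n w a 0"
  have W: "W > 0"
    using Rf_pos unfolding W_def .
  have w_eq: "w i = W * vf n w a i 0" for i
    using W unfolding vf_def W_def by simp
  have "Rf n w a x = W * exp (c * x) * (\<Sum>i<n. vf n w a i 0 * exp ((a i - c) * x))"
    unfolding Rf_def sum_distrib_left
    by (rule sum.cong[OF refl]) (simp add: w_eq left_diff_distrib exp_diff)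
  also have "\<dots> \<ge> W * exp (c * x) * (\<Sum>i<n. vf n w a i 0 * (1 + (a i - c) * x))"
    using W by (intro mult_left_mono sum_mono)
      (auto intro!: mult_left_mono vf_nonneg w_nonneg Rf_pos exp_ge_add_one_self)
  also have "(\<Sum>i<n. vf n w a i 0 * (1 + (a i - c) * x))
      = (\<Sum>i<n. vf n w a i 0) + (\<Sum>i<n. vf n w a i 0 * (a i - c)) * x"
    by (simp add: distrib_left sum.distrib sum_distrib_right mult.assoc)
  also have "\<dots> = 1"
    using sum_vf sum_vf_centred Rf_pos unfolding c_def by (simp add: less_imp_not_eq2)
  finally show ?thesis
    unfolding W_def c_def by simp
qed

lemma vf_le_exp: "i < n \<Longrightarrow> vf n w a i x \<le> vf n w a i 0 * exp (\<mu> * \<bar>x\<bar>)"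
proof -
  assume i: "i < n"
  define c where "c = abar n w a 0"
  have "vf n w a i x \<le> w i * exp (a i * x) / (Rf n w a 0 * exp (c * x))"
    unfolding vf_def c_def using Rf_ge_exp_abar Rf_pos w_nonneg[OF i]
    by (intro divide_left_mono) auto
  also have "\<dots> = vf n w a i 0 * exp ((a i - c) * x)"
    unfolding vf_def by (simp add: left_diff_distrib exp_diff)
  also have "\<dots> \<le> vf n w a i 0 * exp (\<mu> * \<bar>x\<bar>)"
  proof (intro mult_left_mono vf_nonneg w_nonneg Rf_pos i)
    have "(a i - c) * x \<le> \<bar>a i - c\<bar> * \<bar>x\<bar>"
      by (metis abs_ge_self abs_mult)
    also have "\<dots> \<le> \<mu> * \<bar>x\<bar>"
      using dev_le[OF i] unfolding c_def by (simp add: mult_right_mono)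
    finally show "exp ((a i - c) * x) \<le> exp (\<mu> * \<bar>x\<bar>)"
      by simp
  qed
  finally show ?thesis .
qed

lemma mu_nonneg: "\<mu> \<ge> 0"
proof -
  have "n > 0"
    using Rf_pos[of 0] by (cases n) (auto simp: Rf_def)
  then show ?thesis
    using dev_le[of 0] by linarith
qed

lemma cmoment_2_le_shifted: "cmoment n w a 2 x \<le> (\<Sum>i<n. vf n w a i x * (a i - abar n w a 0)^2)"
  unfolding cmoment_def abar_def
  by (rule weighted_variance_le_second_moment[OF sum_vf]) (use Rf_pos in \<open>simp add: less_imp_not_eq2\<close>)

lemma cmoment_2_le_mu: "cmoment n w a 2 x \<le> \<mu>^2"
proof -
  have "(\<Sum>i<n. vf n w a i x * (a i - abar n w a 0)^2) \<le> (\<Sum>i<n. vf n w a i x * \<mu>^2)"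
  proof (intro sum_mono mult_left_mono vf_nonneg w_nonneg Rf_pos)
    fix i assume "i \<in> {..<n}"
    then have "\<bar>a i - abar n w a 0\<bar>^2 \<le> \<mu>^2"
      using dev_le by (intro power_mono) auto
    then show "(a i - abar n w a 0)^2 \<le> \<mu>^2"
      by simp
  qed auto
  also have "\<dots> = \<mu>^2"
    using sum_vf Rf_pos by (simp add: less_imp_not_eq2 flip: sum_distrib_right)
  finally show ?thesis
    using cmoment_2_le_shifted[of x] by linarith
qed

lemma cmoment_2_le_exp: "cmoment n w a 2 x \<le> exp (\<mu> * \<bar>x\<bar>) * cmoment n w a 2 0"
proof -
  have "(\<Sum>i<n. vf n w a i x * (a i - abar n w a 0)^2)
      \<le> (\<Sum>i<n. vf n w a i 0 * exp (\<mu> * \<bar>x\<bar>) * (a i - abar n w a 0)^2)"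
    by (intro sum_mono mult_right_mono vf_le_exp) auto
  also have "\<dots> = exp (\<mu> * \<bar>x\<bar>) * cmoment n w a 2 0"
    unfolding cmoment_def by (simp add: sum_distrib_left algebra_simps)
  finally show ?thesis
    using cmoment_2_le_shifted[of x] by linarith
qed

lemma abs_cmoment_3_le: "\<bar>cmoment n w a 3 x\<bar> \<le> 2 * \<mu> * cmoment n w a 2 x"
proof -
  have "\<bar>abar n w a x - abar n w a 0\<bar> \<le> \<mu>"
    unfolding abar_def[of n w a x] using dev_le sum_vf Rf_pos
    by (intro weighted_mean_dist_le) (auto intro: vf_nonneg w_nonneg simp: less_imp_not_eq2)
  then have "\<bar>a i - abar n w a x\<bar> \<le> 2 * \<mu>" if "i < n" for i
    using dev_le[OF that] by linarith
  then show ?thesis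
    unfolding cmoment_def
    by (intro abs_weighted_cube_le) (auto intro: vf_nonneg w_nonneg Rf_pos)
qed

lemma Kf_remainder_bounds:
  fixes t :: real
  defines "r \<equiv> Kf n w a t - Kf n w a 0 - (abar n w a 0 * t + 1/2 * cmoment n w a 2 0 * t^2)"
  shows "\<bar>r\<bar> \<le> 4/3 * \<mu>^3 * \<bar>t\<bar>^3"
    and "\<bar>r\<bar> \<le> 2/3 * gfun (\<mu> * \<bar>t\<bar>) * cmoment n w a 2 0 * \<bar>t\<bar>^2"
proof -
  obtain x where x: "\<bar>x\<bar> \<le> \<bar>t\<bar>" and "Kf n w a t = Kf n w a 0 + abar n w a 0 * t
      + cmoment n w a 2 0 / 2 * t^2 + cmoment n w a 3 x / 6 * t^3"
    using Kf_Maclaurin Rf_pos by blast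
  then have r: "\<bar>r\<bar> = \<bar>cmoment n w a 3 x\<bar> / 6 * \<bar>t\<bar>^3"
    unfolding r_def by (simp add: abs_mult power_abs)
  have M3: "\<bar>cmoment n w a 3 x\<bar> \<le> 2 * \<mu> * cmoment n w a 2 x"
    by (rule abs_cmoment_3_le)
  show "\<bar>r\<bar> \<le> 4/3 * \<mu>^3 * \<bar>t\<bar>^3"
  proof -
    have "2 * \<mu> * cmoment n w a 2 x \<le> 2 * \<mu> * \<mu>^2"
      using cmoment_2_le_mu mu_nonneg by (intro mult_left_mono) auto
    then have "\<bar>cmoment n w a 3 x\<bar> \<le> 8 * \<mu>^3"
      using M3 mu_nonneg by (simp add: power3_eq_cube power2_eq_square)
    then have "\<bar>cmoment n w a 3 x\<bar> / 6 * \<bar>t\<bar>^3 \<le> 8 * \<mu>^3 / 6 * \<bar>t\<bar>^3"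
      by (intro mult_right_mono divide_right_mono) auto
    then show ?thesis
      unfolding r by simp
  qed
  show "\<bar>r\<bar> \<le> 2/3 * gfun (\<mu> * \<bar>t\<bar>) * cmoment n w a 2 0 * \<bar>t\<bar>^2"
  proof -
    let ?u = "\<mu> * \<bar>t\<bar>"
    have "\<mu> * \<bar>x\<bar> \<le> ?u"
      using mu_nonneg x by (intro mult_left_mono) auto
    also have "?u \<le> 2 * ?u + 4 * ?u^2"
      using mu_nonneg by simp
    finally have "exp (\<mu> * \<bar>x\<bar>) \<le> exp (2 * ?u + 4 * ?u^2)"
      by simp
    then have "exp (\<mu> * \<bar>x\<bar>) * cmoment n w a 2 0 \<le> exp (2 * ?u + 4 * ?u^2) * cmoment n w a 2 0"
      using cmoment_2_nonneg[OF w_nonneg Rf_pos] by (rule mult_right_mono)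
    then have "2 * \<mu> * cmoment n w a 2 x \<le> 2 * \<mu> * (exp (2 * ?u + 4 * ?u^2) * cmoment n w a 2 0)"
      using cmoment_2_le_exp[of x] mu_nonneg by (intro mult_left_mono) auto
    then have "\<bar>cmoment n w a 3 x\<bar> \<le> 2 * \<mu> * (exp (2 * ?u + 4 * ?u^2) * cmoment n w a 2 0)"
      using M3 by linarith
    then have "\<bar>r\<bar> \<le> 2 * \<mu> * (exp (2 * ?u + 4 * ?u^2) * cmoment n w a 2 0) / 6 * \<bar>t\<bar>^3"
      unfolding r by (intro mult_right_mono divide_right_mono) auto
    also have "\<dots> = 1/3 * gfun ?u * cmoment n w a 2 0 * \<bar>t\<bar>^2"
      unfolding gfun_def by (simp add: eval_nat_numeral algebra_simps)
    also have "\<dots> \<le> 2/3 * gfun ?u * cmoment n w a 2 0 * \<bar>t\<bar>^2"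
      using mu_nonneg cmoment_2_nonneg[OF w_nonneg Rf_pos, of 0]
      by (intro mult_right_mono) (auto simp: gfun_def)
    finally show ?thesis .
  qed
qed

end

theorem lemmaA2:
  fixes n :: nat and w a :: "nat \<Rightarrow> real"
  assumes w_nonneg: "\<And>i. i < n \<Longrightarrow> w i \<ge> 0"
    and w_not_all_zero: "\<exists>i<n. w i \<noteq> 0"
  shows "convex_on UNIV (Kf n w a)
    \<and> (\<forall>t. (Kf n w a has_real_derivative abar n w a t) (at t))
    \<and> (\<forall>t. (abar n w a has_real_derivative
              (\<Sum>i<n. vf n w a i t * (a i - abar n w a t) ^ 2)) (at t))
    \<and> (\<forall>t. ((\<lambda>s. \<Sum>i<n. vf n w a i s * (a i - abar n w a s) ^ 2) has_real_derivative
              (\<Sum>i<n. vf n w a i t * (a i - abar n w a t) ^ 3)) (at t))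
    \<and> (\<forall>i<n. vf n w a i 0 = w i / (\<Sum>j<n. w j))
    \<and> (\<forall>t. let mu = Max ((\<lambda>i. \<bar>a i - abar n w a 0\<bar>) ` {..<n});
              s2 = (\<Sum>i<n. vf n w a i 0 * (a i - abar n w a 0) ^ 2);
              rem = ln (\<Sum>i<n. w i * exp (a i * t)) - ln (\<Sum>i<n. w i)
                    - (abar n w a 0 * t + 1/2 * s2 * t ^ 2)
          in \<bar>rem\<bar> \<le> 4/3 * mu ^ 3 * \<bar>t\<bar> ^ 3
             \<and> \<bar>rem\<bar> \<le> 2/3 * gfun (mu * \<bar>t\<bar>) * s2 * \<bar>t\<bar> ^ 2)"
proof -
  have pos: "\<And>t. Rf n w a t > 0"
    using Rf_pos[OF w_nonneg w_not_all_zero] .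
  define \<mu> where "\<mu> = Max ((\<lambda>i. \<bar>a i - abar n w a 0\<bar>) ` {..<n})"
  have "\<bar>a i - abar n w a 0\<bar> \<le> \<mu>" if "i < n" for i
    unfolding \<mu>_def using that by (intro Max_ge) auto
  note remainder = Kf_remainder_bounds[OF w_nonneg pos this]
  have "Kf n w a t = ln (\<Sum>i<n. w i * exp (a i * t))" for t
    unfolding Kf_def Rf_def ..
  with remainder have "let mu = \<mu>; s2 = cmoment n w a 2 0;
      rem = ln (\<Sum>i<n. w i * exp (a i * t)) - ln (\<Sum>i<n. w i)
        - (abar n w a 0 * t + 1/2 * s2 * t ^ 2)
    in \<bar>rem\<bar> \<le> 4/3 * mu ^ 3 * \<bar>t\<bar> ^ 3
      \<and> \<bar>rem\<bar> \<le> 2/3 * gfun (mu * \<bar>t\<bar>) * s2 * \<bar>t\<bar> ^ 2" for t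
    by (simp add: Let_def)
  then show ?thesis
    using Kf_convex[OF pos w_nonneg] Kf_has_real_derivative[OF pos]
      abar_has_real_derivative[OF pos] cmoment_2_has_real_derivative[OF pos] vf_at_0
    unfolding \<mu>_def cmoment_def[abs_def] by blast
qed

end
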